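(* Let $r\ge 2$ and define $\phi_r:\mathbb{R}\times\mathbb{R}\to\mathbb{R}$ by $$\phi_r(a,b)=\frac{1}{r}\Big[a_+^r b_+^r+|a_-|^r+|b_-|^r\Big].$$ Then: 1) For any $r\ge 2$, $\phi_r$ is continuously differentiable on $\mathbb{R}\times\mathbb{R}$ with $$\nabla\phi_r(a,b)=\begin{bmatrix} a_+^{r-1}b_+^r-|a_-|^{r-1}\\ a_+^r b_+^{r-1}-|b_-|^{r-1}\end{bmatrix}.$$ Moreover, $\nabla\phi_r(a,b)=0$ if and only if $\phi_r(a,b)=0$. 2) For any $r>2$, $\phi_r$ is twice continuously differentiable on $\mathbb{R}\times\mathbb{R}$ with $$\nabla^2\phi_r(a,b)=\begin{bmatrix}(r-1)(a_+^{r-2}b_+^r+|a_-|^{r-2}) & r\,a_+^{r-1}b_+^{r-1}\\ r\,a_+^{r-1}b_+^{r-1} & (r-1)(a_+^r b_+^{r-2}+|b_-|^{r-2})\end{bmatrix}.$$ 3) For $r=2$, the generalized Hessian of $\phi_2$ at any $(a,b)\in\mathbb{R}\times\mathbb{R}$ satisfies $$\partial\nabla\phi_2(a,b)\subseteq\left\{\begin{bmatrix}u & 2a_+b_+\\ 2a_+b_+ & v\end{bmatrix}:\ u\in\Xi(a,b),\ v\in\Xi(b,a)\right\}.$$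
   Context: For $a\in\mathbb{R}$, $a_+:=\max\{a,0\}$ and $a_-:=\min\{a,0\}$; $a_+^r$ means $(a_+)^r$. The set $\Xi(a,b)\subseteq\mathbb{R}$ is defined by $\Xi(a,b)=\{b_+^2\}$ if $a>0$, $\Xi(a,b)=\mathrm{co}\{1,b_+^2\}$ (the closed interval between $1$ and $b_+^2$) if $a=0$, and $\Xi(a,b)=\{1\}$ if $a<0$. For a locally Lipschitz map $F:\mathbb{R}^n\to\mathbb{R}^m$, the (Clarke) generalized Jacobian is $\partial F(x)=\mathrm{co}\{\lim \nabla F(x^k): x^k\to x,\ x^k\in D_F\}$, where $D_F$ is the set of points where $F$ is differentiable; for a continuously differentiable function $\varphi$, its generalized Hessian is $\partial\nabla\varphi(x)$, the generalized Jacobian of $\nabla\varphi$. *)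

theory Defs
  imports "HOL-Analysis.Analysis"
begin

definition pospart :: "real \<Rightarrow> real" where "pospart a = max a 0"
definition negpart :: "real \<Rightarrow> real" where "negpart a = min a 0"

definition phi :: "real \<Rightarrow> real \<times> real \<Rightarrow> real" where
  "phi r = (\<lambda>(a,b). (1/r) * ((pospart a) powr r * (pospart b) powr r
                          + \<bar>negpart a\<bar> powr r + \<bar>negpart b\<bar> powr r))"

definition grad :: "(real \<times> real \<Rightarrow> real) \<Rightarrow> real \<times> real \<Rightarrow> real \<times> real" where
  "grad f x = (THE g. (f has_derivative (\<lambda>v. g \<bullet> v)) (at x))"

definition Xi :: "real \<Rightarrow> real \<Rightarrow> real set" where
  "Xi a b = (if a > 0 then {(pospart b)^2}
             else if a = 0 then closed_segment 1 ((pospart b)^2)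
             else {1})"

definition clarke_jacobian ::
  "('a::real_normed_vector \<Rightarrow> 'b::real_normed_vector) \<Rightarrow> 'a \<Rightarrow> ('a \<Rightarrow>\<^sub>L 'b) set" where
  "clarke_jacobian F x = convex hull
     {J. \<exists>X D. (\<forall>k. (F has_derivative blinfun_apply (D k)) (at (X k)))
              \<and> X \<longlonglongrightarrow> x \<and> D \<longlonglongrightarrow> J}"

end

theory Submission
  imports Defs
begin

text \<open>
  Every term of \<open>\<phi>\<^sub>r\<close> is built from \<open>t \<mapsto> t\<^sub>+ powr p\<close>, which for \<open>p > 1\<close> is
  continuously differentiable with derivative \<open>p * t\<^sub>+ powr (p - 1)\<close>.  Applied to \<open>\<phi>\<^sub>r\<close>
  this gives the gradient for \<open>r \<ge> 2\<close>, and applied to the gradient it gives the Hessian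
  for \<open>r > 2\<close>.  The gradient vanishes only where \<open>\<phi>\<^sub>r\<close> does, because a negative
  coordinate makes the corresponding component of the gradient negative.

  For \<open>r = 2\<close> the gradient is \<open>(a\<^sub>+ b\<^sub>+\<^sup>2 + a\<^sub>-, a\<^sub>+\<^sup>2 b\<^sub>+ + b\<^sub>-)\<close>, which is not
  differentiable on the axes.  Its right derivatives along the coordinate directions exist
  everywhere, so at every point of differentiability they determine the Jacobian: the
  off-diagonal entries are \<open>2 a\<^sub>+ b\<^sub>+\<close>, and the first diagonal entry is \<open>b\<^sub>+\<^sup>2\<close> if
  \<open>a \<ge> 0\<close> and \<open>1\<close> otherwise.  Limits of these entries along sequences converging to
  \<open>(a, b)\<close> lie in \<open>\<Xi>(a, b)\<close>.  The set of matrices described by \<open>\<Xi>\<close> is convex, so it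
  contains the convex hull of these limits, which is the Clarke Jacobian.
\<close>

lemma pospart_nonneg [simp]: "pospart x \<ge> 0"
  by (simp add: pospart_def)

lemma pospart_of_nonpos [simp]: "x \<le> 0 \<Longrightarrow> pospart x = 0"
  by (simp add: pospart_def)

lemma pospart_eq_0_iff [simp]: "pospart x = 0 \<longleftrightarrow> x \<le> 0"
  by (simp add: pospart_def max_def)

lemma pospart_powr_pos_iff [simp]: "pospart x powr p > 0 \<longleftrightarrow> x > 0"
  by (simp add: pospart_def max_def)

lemma abs_negpart: "\<bar>negpart x\<bar> = pospart (- x)"
  by (simp add: pospart_def negpart_def)

lemma tendsto_pospart [tendsto_intros]: "(f \<longlongrightarrow> x) F \<Longrightarrow> ((\<lambda>k. pospart (f k)) \<longlongrightarrow> pospart x) F"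
  unfolding pospart_def by (intro tendsto_intros)

lemma continuous_on_pospart_powr [continuous_intros]:
  assumes "continuous_on S f" "q > 0"
  shows "continuous_on S (\<lambda>x. pospart (f x) powr q)"
  using assms unfolding pospart_def by (intro continuous_on_powr' continuous_intros) auto

lemma has_real_derivative_pospart_powr:
  assumes p: "p > 1"
  shows "((\<lambda>x. pospart x powr p) has_real_derivative p * pospart x powr (p - 1)) (at x)"
proof -
  consider "x > 0" | "x < 0" | "x = 0" by linarith
  then show ?thesis
  proof cases
    case 1
    then have "((\<lambda>x. x powr p) has_real_derivative p * pospart x powr (p - 1)) (at x)"
      by (simp add: pospart_def has_real_derivative_powr)
    then show ?thesis
      by (rule has_field_derivative_transform_within_open[where S="{0<..}"])
        (use 1 in \<open>auto simp: pospart_def\<close>)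
  next
    case 2
    have "((\<lambda>x. 0) has_real_derivative p * pospart x powr (p - 1)) (at x)"
      using 2 by (simp add: pospart_def)
    then show ?thesis
      by (rule has_field_derivative_transform_within_open[where S="{..<0}"])
        (use 2 in \<open>auto simp: pospart_def\<close>)
  next
    case 3
    have "isCont (\<lambda>y. pospart y powr (p - 1)) 0"
      using continuous_on_pospart_powr[OF continuous_on_id, of "p - 1" UNIV] p
      by (simp add: continuous_on_eq_continuous_at)
    then have "((\<lambda>y. pospart y powr (p - 1)) \<longlongrightarrow> 0) (at 0)"
      by (simp add: isCont_def pospart_def)
    then have "((\<lambda>y. (pospart y powr p - pospart 0 powr p) / (y - 0)) \<longlongrightarrow> 0) (at 0)"
    proof (rule Lim_null_comparison[rotated], intro always_eventually allI)
      fix y :: real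
      show "norm ((pospart y powr p - pospart 0 powr p) / (y - 0)) \<le> pospart y powr (p - 1)"
        by (cases "y > 0") (auto simp: pospart_def powr_diff)
    qed
    with 3 show ?thesis
      by (simp add: has_field_derivative_iff pospart_def)
  qed
qed

lemma has_derivative_pospart_powr [derivative_intros]:
  assumes "p > 1" "(f has_derivative f') (at x within S)"
  shows "((\<lambda>x. pospart (f x) powr p) has_derivative (\<lambda>h. p * pospart (f x) powr (p - 1) * f' h))
           (at x within S)"
  using has_derivative_compose[OF assms(2)
      has_real_derivative_pospart_powr[OF assms(1), unfolded has_field_derivative_def]]
  by (simp add: mult.assoc)

lemma grad_eqI:
  assumes "(f has_derivative (\<lambda>v. g \<bullet> v)) (at x)"
  shows "grad f x = g"
  unfolding grad_def
proof (rule the_equality)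
  fix g' assume "(f has_derivative (\<lambda>v. g' \<bullet> v)) (at x)"
  then have "g \<bullet> v = g' \<bullet> v" for v
    using has_derivative_unique[OF assms] by metis
  from this[of "(1, 0)"] this[of "(0, 1)"] show "g' = g"
    by (cases g; cases g') simp
qed (fact assms)

text \<open>\<open>|a\<^sub>-|\<close> is written as \<open>(-a)\<^sub>+\<close> from here on, so that the rules for
  \<^const>\<open>pospart\<close> apply to every term.\<close>

definition phi_grad :: "real \<Rightarrow> real \<times> real \<Rightarrow> real \<times> real" where
  "phi_grad r z =
     (pospart (fst z) powr (r - 1) * pospart (snd z) powr r - pospart (- fst z) powr (r - 1),
      pospart (fst z) powr r * pospart (snd z) powr (r - 1) - pospart (- snd z) powr (r - 1))"

lemma phi_eq:
  "phi r z = (pospart (fst z) powr r * pospart (snd z) powr r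
              + pospart (- fst z) powr r + pospart (- snd z) powr r) / r"
  by (simp add: phi_def abs_negpart split: prod.split)

lemma has_derivative_phi:
  assumes "r > 1"
  shows "(phi r has_derivative (\<lambda>v. phi_grad r z \<bullet> v)) (at z)"
  unfolding phi_eq [abs_def] using assms
  by (auto intro!: derivative_eq_intros simp: phi_grad_def inner_prod_def field_simps)

lemma grad_phi: "r > 1 \<Longrightarrow> grad (phi r) = phi_grad r"
  using grad_eqI[OF has_derivative_phi] by blast

lemma continuous_on_phi_grad: "r > 1 \<Longrightarrow> continuous_on UNIV (phi_grad r)"
  unfolding phi_grad_def by (auto intro!: continuous_intros)

lemma phi_grad_eq_0_iff:
  assumes "r > 1"
  shows "phi_grad r z = 0 \<longleftrightarrow> phi r z = 0"
proof (cases "fst z < 0 \<or> snd z < 0")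
  case True
  then have "0 < pospart (- fst z) powr r + pospart (- snd z) powr r"
    by (metis add_pos_nonneg add_nonneg_pos powr_ge_zero pospart_powr_pos_iff neg_0_less_iff_less)
  with True assms have "phi r z \<noteq> 0"
    by (auto simp: phi_eq)
  moreover from True have "phi_grad r z \<noteq> 0"
    by (auto simp: phi_grad_def zero_prod_def)
  ultimately show ?thesis by simp
next
  case False
  then show ?thesis
    using assms by (auto simp: phi_grad_def phi_eq zero_prod_def)
qed

definition sym_matrix2 :: "real \<Rightarrow> real \<Rightarrow> real \<Rightarrow> (real \<times> real) \<Rightarrow>\<^sub>L (real \<times> real)" where
  "sym_matrix2 u w v = Blinfun (\<lambda>x. (u * fst x + w * snd x, w * fst x + v * snd x))"

lemma sym_matrix2_apply:
  "blinfun_apply (sym_matrix2 u w v) = (\<lambda>(h, k). (u * h + w * k, w * h + v * k))"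
  unfolding sym_matrix2_def
  by (subst bounded_linear_Blinfun_apply) (auto intro!: bounded_linear_intros)

lemma sym_matrix2_eqI:
  assumes "blinfun_apply J (1, 0) = (u, w)" "blinfun_apply J (0, 1) = (w, v)"
  shows "J = sym_matrix2 u w v"
proof (rule blinfun_eqI)
  fix x :: "real \<times> real"
  have "x = fst x *\<^sub>R (1, 0) + snd x *\<^sub>R (0, 1)"
    by simp
  then have "blinfun_apply J x = fst x *\<^sub>R blinfun_apply J (1, 0) + snd x *\<^sub>R blinfun_apply J (0, 1)"
    by (metis blinfun.add_right blinfun.scaleR_right)
  then show "blinfun_apply J x = blinfun_apply (sym_matrix2 u w v) x"
    using assms by (simp add: sym_matrix2_apply split_beta algebra_simps)
qed

lemma sym_matrix2_lincomb:
  "s *\<^sub>R sym_matrix2 u w v + t *\<^sub>R sym_matrix2 u' w' v'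
     = sym_matrix2 (s * u + t * u') (s * w + t * w') (s * v + t * v')"
  by (rule blinfun_eqI) (simp add: sym_matrix2_apply blinfun.add_left blinfun.scaleR_left
      split_beta algebra_simps)

lemma continuous_on_sym_matrix2 [continuous_intros]:
  assumes "continuous_on S u" "continuous_on S w" "continuous_on S v"
  shows "continuous_on S (\<lambda>x. sym_matrix2 (u x) (w x) (v x))"
proof -
  have decomp: "sym_matrix2 (u x) (w x) (v x) = u x *\<^sub>R sym_matrix2 1 0 0
          + w x *\<^sub>R sym_matrix2 0 1 0 + v x *\<^sub>R sym_matrix2 0 0 1" for x
    by (rule blinfun_eqI) (simp add: sym_matrix2_apply blinfun.add_left blinfun.scaleR_left
        split_beta algebra_simps)
  show ?thesis
    unfolding decomp using assms by (auto intro!: continuous_intros)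
qed

definition phi_hessian :: "real \<Rightarrow> real \<times> real \<Rightarrow> (real \<times> real) \<Rightarrow>\<^sub>L (real \<times> real)" where
  "phi_hessian r z = sym_matrix2
     ((r - 1) * (pospart (fst z) powr (r - 2) * pospart (snd z) powr r + pospart (- fst z) powr (r - 2)))
     (r * pospart (fst z) powr (r - 1) * pospart (snd z) powr (r - 1))
     ((r - 1) * (pospart (fst z) powr r * pospart (snd z) powr (r - 2) + pospart (- snd z) powr (r - 2)))"

lemma has_derivative_phi_grad:
  assumes "r > 2"
  shows "(phi_grad r has_derivative phi_hessian r z) (at z)"
proof -
  have "r - 1 - 1 = r - 2" by simp
  then show ?thesis
    unfolding phi_grad_def [abs_def] using assms
    by (auto intro!: derivative_eq_intros
        simp: phi_hessian_def sym_matrix2_apply fun_eq_iff algebra_simps)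
qed

lemma phi_hessian_apply:
  "blinfun_apply (phi_hessian r (a, b)) =
     (\<lambda>(h, k).
       ((r - 1) * (pospart a powr (r - 2) * pospart b powr r + pospart (- a) powr (r - 2)) * h
          + r * pospart a powr (r - 1) * pospart b powr (r - 1) * k,
        r * pospart a powr (r - 1) * pospart b powr (r - 1) * h
          + (r - 1) * (pospart a powr r * pospart b powr (r - 2) + pospart (- b) powr (r - 2)) * k))"
  by (simp add: phi_hessian_def sym_matrix2_apply)

lemma continuous_on_phi_hessian: "r > 2 \<Longrightarrow> continuous_on UNIV (phi_hessian r)"
  unfolding phi_hessian_def by (auto intro!: continuous_intros)

lemma has_real_derivative_pospart_square [derivative_intros]:
  assumes "(f has_real_derivative f') (at x within S)"
  shows "((\<lambda>x. (pospart (f x))\<^sup>2) has_real_derivative 2 * pospart (f x) * f') (at x within S)"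
  using DERIV_chain2[OF has_real_derivative_pospart_powr[of 2] assms] by (simp add: powr_numeral)

lemma has_real_derivative_kink_at_right:
  "((\<lambda>t. pospart (x + t) * c - pospart (- (x + t))) has_real_derivative (if x \<ge> 0 then c else 1))
     (at_right 0)"
proof (cases "x \<ge> 0")
  case True
  have "\<forall>\<^sub>F t in at_right 0. (x + t) * c = pospart (x + t) * c - pospart (- (x + t))"
    using eventually_at_right_less by (rule eventually_mono) (use True in \<open>simp add: pospart_def\<close>)
  then have "((\<lambda>t. (x + t) * c) has_real_derivative c) (at_right 0) \<longleftrightarrow>
      ((\<lambda>t. pospart (x + t) * c - pospart (- (x + t))) has_real_derivative c) (at_right 0)"
    by (rule has_field_derivative_cong_eventually) (use True in \<open>simp add: pospart_def\<close>)
  moreover have "((\<lambda>t. (x + t) * c) has_real_derivative c) (at_right 0)"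
    by (auto intro!: derivative_eq_intros)
  ultimately show ?thesis
    using True by simp
next
  case False
  have "((\<lambda>t. x + t) has_real_derivative 1) (at 0)"
    by (auto intro!: derivative_eq_intros)
  then have "((\<lambda>t. pospart (x + t) * c - pospart (- (x + t))) has_real_derivative 1) (at 0)"
    by (rule has_field_derivative_transform_within_open[where S = "{..<-x}"])
      (use False in \<open>auto simp: pospart_def\<close>)
  then show ?thesis
    using False by (simp add: has_field_derivative_at_within)
qed

lemma phi_grad_2:
  "phi_grad 2 z = (pospart (fst z) * (pospart (snd z))\<^sup>2 - pospart (- fst z),
                   (pospart (fst z))\<^sup>2 * pospart (snd z) - pospart (- snd z))"
  by (simp add: phi_grad_def powr_numeral)

lemma has_vector_derivative_phi_grad_2_at_right:
  "((\<lambda>t. phi_grad 2 (a + t, b)) has_vector_derivative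
      (if a \<ge> 0 then (pospart b)\<^sup>2 else 1, 2 * pospart a * pospart b)) (at_right 0)"
  "((\<lambda>t. phi_grad 2 (a, b + t)) has_vector_derivative
      (2 * pospart a * pospart b, if b \<ge> 0 then (pospart a)\<^sup>2 else 1)) (at_right 0)"
proof -
  have "((\<lambda>t. (pospart (a + t))\<^sup>2 * pospart b - pospart (- b)) has_real_derivative
          2 * pospart a * pospart b) (at_right 0)"
    by (auto intro!: derivative_eq_intros)
  then show "((\<lambda>t. phi_grad 2 (a + t, b)) has_vector_derivative
      (if a \<ge> 0 then (pospart b)\<^sup>2 else 1, 2 * pospart a * pospart b)) (at_right 0)"
    unfolding phi_grad_2 fst_conv snd_conv has_real_derivative_iff_has_vector_derivative
    using has_real_derivative_kink_at_right[of a "(pospart b)\<^sup>2"]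
    by (auto intro!: has_vector_derivative_Pair simp: has_real_derivative_iff_has_vector_derivative)
  have "((\<lambda>t. pospart a * (pospart (b + t))\<^sup>2 - pospart (- a)) has_real_derivative
          2 * pospart a * pospart b) (at_right 0)"
    by (auto intro!: derivative_eq_intros)
  then show "((\<lambda>t. phi_grad 2 (a, b + t)) has_vector_derivative
      (2 * pospart a * pospart b, if b \<ge> 0 then (pospart a)\<^sup>2 else 1)) (at_right 0)"
    unfolding phi_grad_2 fst_conv snd_conv has_real_derivative_iff_has_vector_derivative
    using has_real_derivative_kink_at_right[of b "(pospart a)\<^sup>2"]
    by (auto intro!: has_vector_derivative_Pair simp: has_real_derivative_iff_has_vector_derivative
        mult.commute)
qed

lemma has_vector_derivative_along_line:
  assumes "(F has_derivative F') (at x)"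
  shows "((\<lambda>t. F (x + t *\<^sub>R v)) has_vector_derivative F' v) (at 0 within S)"
proof -
  have "((\<lambda>t. x + t *\<^sub>R v) has_derivative (\<lambda>t. t *\<^sub>R v)) (at 0 within S)"
    by (auto intro!: derivative_eq_intros)
  then have "((\<lambda>t. F (x + t *\<^sub>R v)) has_derivative (\<lambda>t. F' (t *\<^sub>R v))) (at 0 within S)"
    by (rule has_derivative_compose) (simp add: assms)
  then show ?thesis
    using has_derivative_linear[OF assms] by (simp add: has_vector_derivative_def linear_scale)
qed

lemma jacobian_phi_grad_2:
  assumes "(phi_grad 2 has_derivative blinfun_apply D) (at (a, b))"
  shows "D = sym_matrix2 (if a \<ge> 0 then (pospart b)\<^sup>2 else 1) (2 * pospart a * pospart b)
                         (if b \<ge> 0 then (pospart a)\<^sup>2 else 1)"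
proof (rule sym_matrix2_eqI)
  have "((\<lambda>t. phi_grad 2 (a + t, b)) has_vector_derivative blinfun_apply D (1, 0)) (at_right 0)"
    using has_vector_derivative_along_line[OF assms, of "(1, 0)"] by simp
  from this has_vector_derivative_phi_grad_2_at_right(1)
  show "blinfun_apply D (1, 0) = (if a \<ge> 0 then (pospart b)\<^sup>2 else 1, 2 * pospart a * pospart b)"
    by (rule vector_derivative_unique_within[rotated]) simp
  have "((\<lambda>t. phi_grad 2 (a, b + t)) has_vector_derivative blinfun_apply D (0, 1)) (at_right 0)"
    using has_vector_derivative_along_line[OF assms, of "(0, 1)"] by simp
  from this has_vector_derivative_phi_grad_2_at_right(2)
  show "blinfun_apply D (0, 1) = (2 * pospart a * pospart b, if b \<ge> 0 then (pospart a)\<^sup>2 else 1)"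
    by (rule vector_derivative_unique_within[rotated]) simp
qed

lemma limit_in_Xi:
  assumes x: "x \<longlonglongrightarrow> a" and y: "y \<longlonglongrightarrow> b"
    and u: "(\<lambda>k. if x k \<ge> 0 then (pospart (y k))\<^sup>2 else 1) \<longlonglongrightarrow> u"
  shows "u \<in> Xi a b"
proof -
  let ?s = "\<lambda>k. if x k \<ge> 0 then (pospart (y k))\<^sup>2 else 1"
  have y2: "(\<lambda>k. (pospart (y k))\<^sup>2) \<longlonglongrightarrow> (pospart b)\<^sup>2"
    by (intro tendsto_intros y)
  consider "a > 0" | "a < 0" | "a = 0" by linarith
  then show ?thesis
  proof cases
    case 1
    have "\<forall>\<^sub>F k in sequentially. (pospart (y k))\<^sup>2 = ?s k"
      using order_tendstoD(1)[OF x 1] by eventually_elim simp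
    then have "?s \<longlonglongrightarrow> (pospart b)\<^sup>2"
      by (rule Lim_transform_eventually[OF y2])
    then have "u = (pospart b)\<^sup>2"
      using u by (rule LIMSEQ_unique[rotated])
    with 1 show ?thesis by (simp add: Xi_def)
  next
    case 2
    have "\<forall>\<^sub>F k in sequentially. 1 = ?s k"
      using order_tendstoD(2)[OF x 2] by eventually_elim simp
    then have "?s \<longlonglongrightarrow> 1"
      by (rule Lim_transform_eventually[OF tendsto_const])
    then have "u = 1"
      using u by (rule LIMSEQ_unique[rotated])
    with 2 show ?thesis by (simp add: Xi_def)
  next
    case 3
    \<comment> \<open>each term is \<open>1\<close> or \<open>(y k)\<^sub>+\<^sup>2\<close>, so the limit is \<open>1\<close> or \<open>b\<^sub>+\<^sup>2\<close>\<close>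
    have "(\<lambda>k. (?s k - 1) * (?s k - (pospart (y k))\<^sup>2)) \<longlonglongrightarrow> (u - 1) * (u - (pospart b)\<^sup>2)"
      by (intro tendsto_intros u y2)
    moreover have "(\<lambda>k. (?s k - 1) * (?s k - (pospart (y k))\<^sup>2)) = (\<lambda>k. 0)"
      by auto
    ultimately have "(\<lambda>k. 0) \<longlonglongrightarrow> (u - 1) * (u - (pospart b)\<^sup>2)"
      by metis
    then have "(u - 1) * (u - (pospart b)\<^sup>2) = 0"
      using LIMSEQ_unique[OF tendsto_const] by metis
    with 3 show ?thesis by (auto simp: Xi_def)
  qed
qed

lemma convex_Xi: "convex (Xi a b)"
  by (simp add: Xi_def)

lemma convex_sym_matrix2_set:
  assumes "convex U" "convex V"
  shows "convex {sym_matrix2 u w v | u v. u \<in> U \<and> v \<in> V}"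
proof (rule convexI, clarify)
  fix s t :: real and u1 v1 u2 v2
  assume st: "0 \<le> s" "0 \<le> t" "s + t = 1" and "u1 \<in> U" "v1 \<in> V" "u2 \<in> U" "v2 \<in> V"
  then have "s * u1 + t * u2 \<in> U" "s * v1 + t * v2 \<in> V"
    using convexD[OF assms(1), of u1 u2 s t] convexD[OF assms(2), of v1 v2 s t] by simp_all
  moreover have "s * w + t * w = w"
    using st(3) by (metis distrib_right mult_1)
  ultimately show "\<exists>u v. s *\<^sub>R sym_matrix2 u1 w v1 + t *\<^sub>R sym_matrix2 u2 w v2 = sym_matrix2 u w v
                         \<and> u \<in> U \<and> v \<in> V"
    by (auto simp: sym_matrix2_lincomb)
qed

lemma clarke_jacobian_phi_grad_2:
  "clarke_jacobian (phi_grad 2) (a, b) \<subseteq>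
     {sym_matrix2 u (2 * pospart a * pospart b) v | u v. u \<in> Xi a b \<and> v \<in> Xi b a}"
  unfolding clarke_jacobian_def
proof (rule hull_minimal, clarify)
  fix J X and D :: "nat \<Rightarrow> (real \<times> real) \<Rightarrow>\<^sub>L (real \<times> real)"
  assume deriv: "\<forall>k. (phi_grad 2 has_derivative blinfun_apply (D k)) (at (X k))"
    and X: "X \<longlonglongrightarrow> (a, b)" and D: "D \<longlonglongrightarrow> J"
  define x y where "x = (\<lambda>k. fst (X k))" and "y = (\<lambda>k. snd (X k))"
  have x: "x \<longlonglongrightarrow> a" and y: "y \<longlonglongrightarrow> b"
    unfolding x_def y_def using tendsto_fst[OF X] tendsto_snd[OF X] by simp_all
  have "D k = sym_matrix2 (if x k \<ge> 0 then (pospart (y k))\<^sup>2 else 1) (2 * pospart (x k) * pospart (y k))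
                          (if y k \<ge> 0 then (pospart (x k))\<^sup>2 else 1)" for k
    using jacobian_phi_grad_2 deriv unfolding x_def y_def by (metis prod.collapse)
  then have D_apply:
      "blinfun_apply (D k) (1, 0) = (if x k \<ge> 0 then (pospart (y k))\<^sup>2 else 1, 2 * pospart (x k) * pospart (y k))"
      "blinfun_apply (D k) (0, 1) = (2 * pospart (x k) * pospart (y k), if y k \<ge> 0 then (pospart (x k))\<^sup>2 else 1)"
    for k by (simp_all add: sym_matrix2_apply)
  have lim: "(\<lambda>k. blinfun_apply (D k) e) \<longlonglongrightarrow> blinfun_apply J e" for e
    using D by (intro tendsto_intros)
  have w: "(\<lambda>k. 2 * pospart (x k) * pospart (y k)) \<longlonglongrightarrow> 2 * pospart a * pospart b"
    by (intro tendsto_intros x y)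
  obtain u w1 where J1: "blinfun_apply J (1, 0) = (u, w1)" by fastforce
  obtain w2 v where J2: "blinfun_apply J (0, 1) = (w2, v)" by fastforce
  have u: "u \<in> Xi a b"
    using limit_in_Xi[OF x y] tendsto_fst[OF lim[of "(1, 0)"]] by (simp add: D_apply J1)
  have v: "v \<in> Xi b a"
    using limit_in_Xi[OF y x] tendsto_snd[OF lim[of "(0, 1)"]] by (simp add: D_apply J2)
  have "w1 = 2 * pospart a * pospart b"
    using tendsto_snd[OF lim[of "(1, 0)"]] by (intro LIMSEQ_unique[OF _ w]) (simp add: D_apply J1)
  moreover have "w2 = 2 * pospart a * pospart b"
    using tendsto_fst[OF lim[of "(0, 1)"]] by (intro LIMSEQ_unique[OF _ w]) (simp add: D_apply J2)
  ultimately have "J = sym_matrix2 u (2 * pospart a * pospart b) v"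
    using J1 J2 by (intro sym_matrix2_eqI) simp_all
  with u v show "\<exists>u v. J = sym_matrix2 u (2 * pospart a * pospart b) v \<and> u \<in> Xi a b \<and> v \<in> Xi b a"
    by blast
qed (intro convex_sym_matrix2_set convex_Xi)

theorem proposition2p2:
  shows
  "(\<forall>r::real. r \<ge> 2 \<longrightarrow>
      (\<forall>x. phi r differentiable (at x))
    \<and> continuous_on UNIV (grad (phi r))
    \<and> (\<forall>a b. grad (phi r) (a,b) =
          ((pospart a) powr (r-1) * (pospart b) powr r - \<bar>negpart a\<bar> powr (r-1),
           (pospart a) powr r * (pospart b) powr (r-1) - \<bar>negpart b\<bar> powr (r-1)))
    \<and> (\<forall>a b. grad (phi r) (a,b) = 0 \<longleftrightarrow> phi r (a,b) = 0))
  \<and>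
  (\<forall>r::real. r > 2 \<longrightarrow>
     (\<exists>H :: real \<times> real \<Rightarrow> (real \<times> real) \<Rightarrow>\<^sub>L (real \<times> real).
        continuous_on UNIV H
      \<and> (\<forall>a b. (grad (phi r) has_derivative blinfun_apply (H (a,b))) (at (a,b))
           \<and> blinfun_apply (H (a,b)) =
               (\<lambda>(h,k).
                 ((r-1) * ((pospart a) powr (r-2) * (pospart b) powr r + \<bar>negpart a\<bar> powr (r-2)) * h
                    + r * (pospart a) powr (r-1) * (pospart b) powr (r-1) * k,
                  r * (pospart a) powr (r-1) * (pospart b) powr (r-1) * h
                    + (r-1) * ((pospart a) powr r * (pospart b) powr (r-2) + \<bar>negpart b\<bar> powr (r-2)) * k)))))
  \<and>
  (\<forall>a b. clarke_jacobian (grad (phi 2)) (a,b) \<subseteq>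
     {J. \<exists>u \<in> Xi a b. \<exists>v \<in> Xi b a.
          blinfun_apply J = (\<lambda>(h,k). (u * h + 2 * pospart a * pospart b * k,
                                        2 * pospart a * pospart b * h + v * k))})"
  apply (intro conjI allI impI)
  subgoal for r x
    using has_derivative_phi[of r x] by (auto simp: differentiable_def)
  subgoal for r
    using continuous_on_phi_grad[of r] by (simp add: grad_phi)
  subgoal for r a b
    by (simp add: grad_phi phi_grad_def abs_negpart)
  subgoal for r a b
    by (simp add: grad_phi phi_grad_eq_0_iff)
  subgoal for r
    using continuous_on_phi_hessian[of r] has_derivative_phi_grad[of r "(a, b)" for a b]
    by (intro exI[of _ "phi_hessian r"]) (simp add: grad_phi phi_hessian_apply abs_negpart)
  subgoal for a b
    using clarke_jacobian_phi_grad_2[of a b] by (force simp: grad_phi sym_matrix2_apply)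
  done

end
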